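(* Let $k\ge 10$, and consider the procedure $\mathcal{A}$ (described in the context) started on an input $(\mathcal{L},\ell,\tau)$ with $\mathrm{rank}(\mathcal{L})=n\ge k$, $\tau\ge0$ and $1\le\ell\le n-k+1$. Then the total number of invocations of $\mathcal{A}$ made during the whole recursion is at most $4^{\tau}\cdot p(n)$ for a fixed polynomial $p$ (independent of $\mathcal{L},\ell,\tau,k$).
   Context: Notation: for a lattice $\mathcal{L}$, $\mathcal{L}^*$ is its dual lattice, and for a lattice $\mathcal{M}$, $\mathcal{M}^\perp$ is the orthogonal complement of $\mathrm{span}(\mathcal{M})$; for a rank-$r$ sublattice $\mathcal{M}\subseteq \mathcal{L}^*$, $\mathcal{L}\cap\mathcal{M}^\perp$ has rank $\mathrm{rank}(\mathcal{L})-r$. Sublattices returned by $\mathcal{A}(\mathcal{L},\ell,\tau)$ have rank $\ell$. Procedure $\mathcal{A}(\mathcal{L},\ell,\tau)$, with $n:=\mathrm{rank}(\mathcal{L})$ and $n>\ell\ge1$, $\tau\ge 0$ integers: 1. Duality step: if $\max\{1,(n-k)/5\}<\ell<n/2$ or $\ell\ge n-\max\{1,(n-k)/10\}$, output $\mathcal{L}\cap\mathcal{A}(\mathcal{L}^*,n-\ell,\tau)^\perp$. 2. Base cases: (a) if $n=k$ and $\ell=1$, call an HSVP oracle on $\mathcal{L}$ and output the lattice generated by the returned vector; (b) if $\tau=0$, output the lattice generated by the first $\ell$ vectors of an LLL-reduced basis of $\mathcal{L}$. 3. Recursive step: otherwise set $\ell^*=\lceil (n-k)/20\rceil$, $b=1$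 if $\ell<n/2$ and $b=0$ otherwise, compute $\mathcal{M}:=\mathcal{A}(\mathcal{L}^*,\ell^*,\tau-b)$ and output $\mathcal{A}(\mathcal{L}\cap\mathcal{M}^\perp,\ell,\tau)$. The sequence of parameters $(n,\ell,\tau)$ of the invocations depends only on the initial parameters. *)

theory Defs
  imports "HOL-Computational_Algebra.Polynomial" Complex_Main
begin

text \<open>calls k n l t c : the invocation A(L, l, t) with rank(L) = n (and parameter k)
  terminates, and the total number of invocations of A made (including this one
  and all recursive ones) equals c.  Only the parameters (n, l, t) matter.\<close>

definition dual_cond :: "nat \<Rightarrow> nat \<Rightarrow> nat \<Rightarrow> bool" where
  "dual_cond k n l \<longleftrightarrow>
     (max 1 ((real n - real k) / 5) < real l \<and> real l < real n / 2) \<or>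
     real l \<ge> real n - max 1 ((real n - real k) / 10)"

inductive calls :: "nat \<Rightarrow> nat \<Rightarrow> nat \<Rightarrow> nat \<Rightarrow> nat \<Rightarrow> bool" where
  duality: "dual_cond k n l \<Longrightarrow> calls k n (n - l) t c \<Longrightarrow> calls k n l t (Suc c)"
| base_hsvp: "\<not> dual_cond k n l \<Longrightarrow> n = k \<Longrightarrow> l = 1 \<Longrightarrow> calls k n l t 1"
| base_lll: "\<not> dual_cond k n l \<Longrightarrow> \<not> (n = k \<and> l = 1) \<Longrightarrow> t = 0 \<Longrightarrow> calls k n l t 1"
| recur: "\<not> dual_cond k n l \<Longrightarrow> \<not> (n = k \<and> l = 1) \<Longrightarrow> t \<noteq> 0 \<Longrightarrow>
     ls = nat \<lceil>(real n - real k) / 20\<rceil> \<Longrightarrow>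
     b = (if real l < real n / 2 then 1 else 0) \<Longrightarrow>
     calls k n ls (t - b) c1 \<Longrightarrow> calls k (n - ls) l t c2 \<Longrightarrow>
     calls k n l t (1 + c1 + c2)"

end

theory Submission
  imports Defs
begin

text \<open>Write \<open>d = n - k\<close>. Every invocation satisfies \<open>\<ell> \<le> d + 1\<close> or \<open>n - \<ell> \<le> d + 1\<close>, and a duality
  step is never followed by another one. A non-dual invocation with \<open>\<tau> > 0\<close> and \<open>n > k\<close> makes
  one call with parameters \<open>(n, \<ell>\<^sup>*, \<tau> - 1)\<close> and, after at most one further call on
  \<open>(n, \<ell>\<^sup>*, \<tau>)\<close>, at most two calls of rank \<open>n - \<ell>\<^sup>*\<close> with the same \<open>\<tau>\<close>, where
  \<open>d - \<ell>\<^sup>* + 2 \<le> 21/22 (d + 2)\<close>. As \<open>1/4 + 2 (21/22)\<^sup>2\<^sup>2 < 1\<close>, induction on \<open>\<tau>\<close> and then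
  on \<open>n\<close> bounds the number of invocations by \<open>4\<^sup>\<tau> (d + 2)\<^sup>2\<^sup>2\<close>, less one for non-dual
  invocations, which pays for the duality step.\<close>

definition lstar :: "nat \<Rightarrow> nat \<Rightarrow> nat" where
  "lstar k n = nat \<lceil>(real n - real k) / 20\<rceil>"

definition call_bound :: "nat \<Rightarrow> nat \<Rightarrow> real" where
  "call_bound t d = 4 ^ t * (real d + 2) ^ 22"

lemma lstar_bounds:
  assumes "k < n"
  shows "1 \<le> lstar k n" "lstar k n \<le> n - k"
    "real (n - k) / 20 \<le> real (lstar k n)" "real (lstar k n) < real (n - k) / 20 + 1"
proof -
  define x where "x = real (n - k) / 20"
  have "0 < x" using assms by (simp add: x_def)
  then have lstar_eq: "real (lstar k n) = of_int \<lceil>x\<rceil>"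
    using assms by (simp add: lstar_def x_def of_nat_diff)
  show lower: "real (n - k) / 20 \<le> real (lstar k n)"
    using lstar_eq le_of_int_ceiling[of x] by (simp add: x_def)
  show upper: "real (lstar k n) < real (n - k) / 20 + 1"
    using lstar_eq ceiling_correct[of x] by (simp add: x_def)
  show "1 \<le> lstar k n" using lower \<open>0 < x\<close> x_def by simp
  have "real (lstar k n) < real (n - k) + 1" using upper of_nat_0_le_iff[of "n - k"] by linarith
  then show "lstar k n \<le> n - k" by linarith
qed

lemma call_bound_step:
  assumes "t \<noteq> 0" "1 \<le> s" "real d / 20 \<le> real s" "s \<le> d"
  shows "call_bound (t - 1) d + 2 * call_bound t (d - s) + 3 \<le> call_bound t d"
proof -
  define X where "X = (real d + 2) ^ 22"
  define W where "W = 4 ^ (t - 1) * X"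
  have "real (d - s) + 2 \<le> 21/22 * (real d + 2)"
    using assms(2-4) by (simp add: of_nat_diff)
  then have "(real (d - s) + 2) ^ 22 \<le> (21/22) ^ 22 * X"
    unfolding X_def power_mult_distrib[symmetric] by (rule power_mono) simp
  also have "\<dots> \<le> 9/25 * X"
    by (rule mult_right_mono) (simp_all add: X_def power_divide)
  finally have shrink: "(real (d - s) + 2) ^ 22 \<le> 9/25 * X" .
  have four_pow: "(4::real) ^ t = 4 * 4 ^ (t - 1)"
    using assms(1) by (cases t) auto
  have "(2::real) ^ 22 \<le> X" unfolding X_def by (rule power_mono) auto
  moreover have "(1::real) \<le> 4 ^ (t - 1)" by simp
  ultimately have "25 \<le> W" unfolding W_def
    using mult_mono[of 1 "4 ^ (t - 1)" "2 ^ 22" X] by simp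
  moreover have "call_bound t (d - s) \<le> 36/25 * W"
    unfolding call_bound_def four_pow W_def using shrink by (simp add: mult_left_mono)
  moreover have "call_bound (t - 1) d = W" "call_bound t d = 4 * W"
    unfolding call_bound_def four_pow W_def X_def by simp_all
  ultimately show ?thesis by linarith
qed

lemma dual_cond_iff:
  assumes "k \<le> n"
  shows "dual_cond k n l \<longleftrightarrow>
    (max 1 (real (n - k) / 5) < real l \<and> real l < real n / 2) \<or>
    real n - max 1 (real (n - k) / 10) \<le> real l"
  using assms by (simp add: dual_cond_def of_nat_diff)

lemma dual_cond_complement:
  assumes "k \<le> n" "2 < n" "l \<le> n" "dual_cond k n l"
  shows "\<not> dual_cond k n (n - l)"
proof -
  define a where "a = max 1 (real (n - k) / 5)"
  define b where "b = max 1 (real (n - k) / 10)"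
  have "1 \<le> b" "b \<le> a" "2 * b < real n" using assms(1,2) by (auto simp: a_def b_def max_def)
  with assms(3,4) show ?thesis
    unfolding dual_cond_iff[OF assms(1)] a_def[symmetric] b_def[symmetric] by (auto simp: of_nat_diff)
qed

lemma not_dual_cond_lstar:
  assumes "2 \<le> k" "k < n"
  shows "\<not> dual_cond k n (lstar k n)"
proof -
  note lstar = lstar_bounds[OF assms(2)]
  have "real (lstar k n) \<le> max 1 (real (n - k) / 5)"
  proof (cases "lstar k n = 1")
    case False
    then have "2 \<le> real (lstar k n)" using lstar(1) by simp
    then have "real (lstar k n) \<le> real (n - k) / 5" using lstar(4) by linarith
    then show ?thesis by simp
  qed simp
  moreover have "max 1 (real (n - k) / 10) \<le> 1 + real (n - k) / 10"
    "2 \<le> real k" "real (n - k) = real n - real k"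
    using assms by (simp_all add: of_nat_diff)
  then have "real (lstar k n) < real n - max 1 (real (n - k) / 10)"
    using lstar(4) by linarith
  ultimately show ?thesis unfolding dual_cond_iff[OF less_imp_le[OF assms(2)]] by linarith
qed

lemma lstar_less_half:
  assumes "2 \<le> k" "k < n"
  shows "real (lstar k n) < real n / 2"
proof -
  have "2 \<le> real k" "real k + 1 \<le> real n" "real (n - k) = real n - real k"
    using assms by (simp_all add: of_nat_diff)
  then show ?thesis using lstar_bounds(4)[OF assms(2)] by linarith
qed

lemma lstar_less_corank:
  assumes "k < n" "l \<le> n" "\<not> dual_cond k n l"
  shows "lstar k n < n - l"
proof -
  note lstar = lstar_bounds[OF assms(1)]
  have "max 1 (real (n - k) / 10) < real n - real l"
    using assms(3) unfolding dual_cond_iff[OF less_imp_le[OF assms(1)]] by linarith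
  then have corank: "1 < real (n - l)" "real (n - k) / 10 < real (n - l)"
    using assms(2) by (simp_all add: of_nat_diff)
  show ?thesis
  proof (cases "lstar k n = 1")
    case False
    then have "2 \<le> real (lstar k n)" using lstar(1) by simp
    then have "real (lstar k n) < real (n - l)" using corank lstar(4) by linarith
    then show ?thesis by simp
  qed (use corank in simp)
qed

definition admissible :: "nat \<Rightarrow> nat \<Rightarrow> nat \<Rightarrow> bool" where
  "admissible k n l \<longleftrightarrow> k \<le> n \<and> 1 \<le> l \<and> l < n \<and> (l \<le> n - k + 1 \<or> n - l \<le> n - k + 1)"

lemma admissible_complement: "admissible k n l \<Longrightarrow> admissible k n (n - l)"
  unfolding admissible_def by auto

lemma admissible_lstar: "0 < k \<Longrightarrow> k < n \<Longrightarrow> admissible k n (lstar k n)"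
  using lstar_bounds(1,2)[of k n] unfolding admissible_def by auto

lemma admissible_rank_eq:
  assumes "admissible k k l" "\<not> dual_cond k k l"
  shows "l = 1"
proof (rule ccontr)
  assume "l \<noteq> 1"
  with assms(1) have "k = l + 1" unfolding admissible_def by auto
  then show False using assms(2) unfolding dual_cond_def by simp
qed

lemma admissible_recur:
  assumes adm: "admissible k n l" and "k < n" and nondual: "\<not> dual_cond k n l"
  shows "admissible k (n - lstar k n) l"
proof -
  have corank: "lstar k n < n - l" using lstar_less_corank assms unfolding admissible_def by simp
  note lstar = lstar_bounds(2,4)[OF \<open>k < n\<close>]
  have "l + lstar k n \<le> n - k + 1 \<or> n - l \<le> n - k + 1"
  proof (cases "real l < real n / 2")
    case True
    then have "real l \<le> 1 \<or> real l \<le> real (n - k) / 5"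
      using nondual \<open>k < n\<close> by (auto simp: dual_cond_iff)
    then have "real l + real (lstar k n) < real (n - k) + 2" using lstar by auto
    then show ?thesis by linarith
  next
    case False
    then show ?thesis using adm unfolding admissible_def by auto
  qed
  then show ?thesis using adm corank lstar(1) unfolding admissible_def by auto
qed

lemma two_le_call_bound: "2 \<le> call_bound t d"
proof -
  have "(2::real) \<le> (real d + 2) ^ 1" by simp
  also have "\<dots> \<le> (real d + 2) ^ 22" by (rule power_increasing) auto
  also have "\<dots> \<le> call_bound t d" unfolding call_bound_def by simp
  finally show ?thesis .
qed

lemma call_bound_le_poly:
  assumes "d \<le> n"
  shows "call_bound t d \<le> 4 ^ t * poly ([:2, 1:] ^ 22) (real n)"
proof -
  have "(real d + 2) ^ 22 \<le> (real n + 2) ^ 22" using assms by (intro power_mono) auto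
  then show ?thesis unfolding call_bound_def by (simp add: poly_power add.commute)
qed

definition calls_at_most :: "nat \<Rightarrow> nat \<Rightarrow> nat \<Rightarrow> nat \<Rightarrow> real \<Rightarrow> bool" where
  "calls_at_most k n l t B \<longleftrightarrow> (\<exists>c. calls k n l t c \<and> real c \<le> B)"

lemma calls_at_most_mono: "calls_at_most k n l t B \<Longrightarrow> B \<le> B' \<Longrightarrow> calls_at_most k n l t B'"
  unfolding calls_at_most_def by force

lemma calls_at_most_duality:
  "dual_cond k n l \<Longrightarrow> calls_at_most k n (n - l) t B \<Longrightarrow> calls_at_most k n l t (B + 1)"
  unfolding calls_at_most_def by (force intro: calls.duality)

lemma calls_at_most_base:
  assumes "admissible k n l" "\<not> dual_cond k n l" "t = 0 \<or> n = k"
  shows "calls_at_most k n l t 1"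
proof (cases "n = k \<and> l = 1")
  case True
  then show ?thesis using assms(2) calls.base_hsvp unfolding calls_at_most_def by force
next
  case False
  moreover have "n \<noteq> k" using False admissible_rank_eq assms(1,2) by blast
  ultimately show ?thesis using assms(2,3) calls.base_lll unfolding calls_at_most_def by force
qed

lemma calls_at_most_recur:
  assumes "\<not> dual_cond k n l" "\<not> (n = k \<and> l = 1)" "t \<noteq> 0"
    and "calls_at_most k n (lstar k n) (t - (if real l < real n / 2 then 1 else 0)) B\<^sub>1"
    and "calls_at_most k (n - lstar k n) l t B\<^sub>2"
  shows "calls_at_most k n l t (1 + B\<^sub>1 + B\<^sub>2)"
proof -
  obtain c\<^sub>1 c\<^sub>2 where
    c\<^sub>1: "calls k n (lstar k n) (t - (if real l < real n / 2 then 1 else 0)) c\<^sub>1" "real c\<^sub>1 \<le> B\<^sub>1"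
    and c\<^sub>2: "calls k (n - lstar k n) l t c\<^sub>2" "real c\<^sub>2 \<le> B\<^sub>2"
    using assms(4,5) unfolding calls_at_most_def by blast
  have "calls k n l t (1 + c\<^sub>1 + c\<^sub>2)"
    using calls.recur[OF assms(1-3) refl refl c\<^sub>1(1)[unfolded lstar_def] c\<^sub>2(1)[unfolded lstar_def]] .
  with c\<^sub>1(2) c\<^sub>2(2) show ?thesis unfolding calls_at_most_def by force
qed

lemma calls_at_most_of_nondual:
  assumes "3 \<le> k" "admissible k n l"
    and nondual: "\<And>l'. admissible k n l' \<Longrightarrow> \<not> dual_cond k n l' \<Longrightarrow>
      calls_at_most k n l' t (call_bound t (n - k) - 1)"
  shows "calls_at_most k n l t (call_bound t (n - k))"
proof (cases "dual_cond k n l")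
  case True
  have "k \<le> n" "2 < n" "l \<le> n" using assms(1,2) unfolding admissible_def by auto
  then have "\<not> dual_cond k n (n - l)" using dual_cond_complement True by blast
  then show ?thesis
    using calls_at_most_duality[OF True nondual] admissible_complement[OF assms(2)] by simp
next
  case False
  then show ?thesis using nondual[OF assms(2)] calls_at_most_mono by fastforce
qed

context
  fixes k n t :: nat
  assumes "3 \<le> k" "k < n" "t \<noteq> 0"
    and prev_t: "calls_at_most k n (lstar k n) (t - 1) (call_bound (t - 1) (n - k) - 1)"
    and sub_rank: "\<And>l. admissible k (n - lstar k n) l \<Longrightarrow>
      calls_at_most k (n - lstar k n) l t (call_bound t (n - k - lstar k n))"
begin

lemma calls_at_most_small_step:
  assumes "admissible k n l" "\<not> dual_cond k n l" "real l < real n / 2"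
  shows "calls_at_most k n l t (call_bound (t - 1) (n - k) + call_bound t (n - k - lstar k n))"
proof -
  have "calls_at_most k n (lstar k n) (t - (if real l < real n / 2 then 1 else 0))
      (call_bound (t - 1) (n - k) - 1)"
    using prev_t assms(3) by simp
  from calls_at_most_recur[OF assms(2) _ \<open>t \<noteq> 0\<close> this
      sub_rank[OF admissible_recur[OF assms(1) \<open>k < n\<close> assms(2)]]]
  show ?thesis using \<open>k < n\<close> by simp
qed

lemma calls_at_most_nondual_step:
  assumes "admissible k n l" "\<not> dual_cond k n l"
  shows "calls_at_most k n l t (call_bound t (n - k) - 1)"
proof -
  have step: "call_bound (t - 1) (n - k) + 2 * call_bound t (n - k - lstar k n) + 3 \<le> call_bound t (n - k)"
    using call_bound_step[OF \<open>t \<noteq> 0\<close> lstar_bounds(1,3,2)[OF \<open>k < n\<close>]] .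
  show ?thesis
  proof (cases "real l < real n / 2")
    case True
    then show ?thesis using calls_at_most_small_step[OF assms True] step
        two_le_call_bound[of t "n - k - lstar k n"] calls_at_most_mono by fastforce
  next
    case False
    have "\<not> dual_cond k n (lstar k n)" "real (lstar k n) < real n / 2"
      using not_dual_cond_lstar lstar_less_half \<open>3 \<le> k\<close> \<open>k < n\<close> by simp_all
    then have "calls_at_most k n (lstar k n) t
        (call_bound (t - 1) (n - k) + call_bound t (n - k - lstar k n))"
      using calls_at_most_small_step admissible_lstar \<open>3 \<le> k\<close> \<open>k < n\<close> by simp
    then have "calls_at_most k n (lstar k n) (t - (if real l < real n / 2 then 1 else 0))
        (call_bound (t - 1) (n - k) + call_bound t (n - k - lstar k n))"
      using False by simp
    from calls_at_most_recur[OF assms(2) _ \<open>t \<noteq> 0\<close> this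
        sub_rank[OF admissible_recur[OF assms(1) \<open>k < n\<close> assms(2)]]]
    have "calls_at_most k n l t (1 + (call_bound (t - 1) (n - k) + call_bound t (n - k - lstar k n))
        + call_bound t (n - k - lstar k n))"
      using \<open>k < n\<close> by blast
    then show ?thesis using step calls_at_most_mono by fastforce
  qed
qed

end

lemma calls_at_most_nondual:
  assumes "3 \<le> k" "admissible k n l" "\<not> dual_cond k n l"
  shows "calls_at_most k n l t (call_bound t (n - k) - 1)"
  using assms(2,3)
proof (induction t arbitrary: n l rule: less_induct)
  case (less t)
  note IH_smaller_t = less.IH
  from less.prems show ?case
  proof (induction n arbitrary: l rule: less_induct)
    case (less n)
    consider "t = 0 \<or> n = k" | "t \<noteq> 0" "k < n"
      using less.prems(1) unfolding admissible_def by linarith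
    then show ?case
    proof cases
      case 1
      then show ?thesis using calls_at_most_base[OF less.prems 1]
          two_le_call_bound[of t "n - k"] calls_at_most_mono by fastforce
    next
      case 2
      have "calls_at_most k n (lstar k n) (t - 1) (call_bound (t - 1) (n - k) - 1)"
        using IH_smaller_t[of "t - 1"] 2 admissible_lstar not_dual_cond_lstar \<open>3 \<le> k\<close> by simp
      moreover have "calls_at_most k (n - lstar k n) l' t (call_bound t (n - k - lstar k n))"
        if "admissible k (n - lstar k n) l'" for l'
      proof -
        have "n - lstar k n < n" using lstar_bounds(1)[OF \<open>k < n\<close>] \<open>k < n\<close> by simp
        then have "calls_at_most k (n - lstar k n) l' t (call_bound t (n - lstar k n - k))"
          using calls_at_most_of_nondual[OF \<open>3 \<le> k\<close> that] less.IH by blast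
        then show ?thesis by (simp only: diff_commute[of n "lstar k n" k])
      qed
      ultimately show ?thesis using calls_at_most_nondual_step \<open>3 \<le> k\<close> 2 less.prems by blast
    qed
  qed
qed

theorem mainTheorem3:
  "\<exists>p :: real poly. \<forall>k n l t. k \<ge> 10 \<longrightarrow> n \<ge> k \<longrightarrow> 1 \<le> l \<longrightarrow> l \<le> n - k + 1 \<longrightarrow>
     (\<exists>c. calls k n l t c \<and> real c \<le> 4 ^ t * poly p (real n))"
proof (intro exI[of _ "[:2, 1:] ^ 22"] allI impI)
  fix k n l t :: nat
  assume "k \<ge> 10" "n \<ge> k" "1 \<le> l" "l \<le> n - k + 1"
  then have "3 \<le> k" "admissible k n l" unfolding admissible_def by auto
  then have "calls_at_most k n l t (call_bound t (n - k))"
    using calls_at_most_of_nondual calls_at_most_nondual by blast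
  then show "\<exists>c. calls k n l t c \<and> real c \<le> 4 ^ t * poly ([:2, 1:] ^ 22) (real n)"
    using call_bound_le_poly[of "n - k" n t] unfolding calls_at_most_def by force
qed

end
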